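(* Let $h:(0,\infty)\to[0,\infty)$ be such that there exist $C\ge1$ and $\beta>0$ with $h(s)+C\ge\frac{1}{C}\min\left(1,\frac{t^{\beta}}{s^{\beta}}\right)h(t)$ for all $t,s\in(0,\infty)$. Then there exists $A\ge1$ such that for every $x\in(0,\infty)$, $H(x)\le h(x)\le AH(x)+A$, where $H$ is the largest convex minorant of $h$.
   Context: The largest convex minorant $H$ of $h$ is the largest convex function on $(0,\infty)$ with $H\le h$. *)

theory Defs
  imports "HOL-Analysis.Analysis"
begin

definition largest_convex_minorant :: "(real \<Rightarrow> real) \<Rightarrow> (real \<Rightarrow> real) \<Rightarrow> bool" where
  "largest_convex_minorant h H \<longleftrightarrow>
     convex_on {0<..} H \<and> (\<forall>x>0. H x \<le> h x) \<and>
     (\<forall>g. convex_on {0<..} g \<and> (\<forall>x>0. g x \<le> h x) \<longrightarrow> (\<forall>x>0. g x \<le> H x))"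

end

theory Submission
  imports Defs
begin

text \<open>Fix \<open>x\<^sub>0 > 0\<close>. The hypothesis with \<open>t = x\<^sub>0\<close> bounds \<open>h\<close> from below by
  \<open>h(x\<^sub>0)/C \<cdot> min(1, (x\<^sub>0/x)\<^sup>\<beta>) - C\<close>, which need not be convex. Beneath it lies the convex
  tent \<open>x \<mapsto> h(x\<^sub>0)/(2\<^sup>\<beta> C) \<cdot> max(0, 1 - x/(2x\<^sub>0)) - C\<close>, so \<open>H\<close> dominates the tent; at
  \<open>x\<^sub>0\<close> this gives \<open>h(x\<^sub>0) \<le> 2 \<cdot> 2\<^sup>\<beta> C (H(x\<^sub>0) + C)\<close>. Since \<open>H \<ge> 0\<close> (the zero function is a
  convex minorant), \<open>A = 2 \<cdot> 2\<^sup>\<beta> C\<^sup>2\<close> works.\<close>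

lemma convex_on_max:
  assumes "convex_on S f" and "convex_on S g"
  shows "convex_on S (\<lambda>x. max (f x) (g x))"
proof -
  have "convex S"
    using assms(1) by (rule convex_on_imp_convex)
  moreover have "max (f (u *\<^sub>R x + v *\<^sub>R y)) (g (u *\<^sub>R x + v *\<^sub>R y))
      \<le> u * max (f x) (g x) + v * max (f y) (g y)"
    if "x \<in> S" "y \<in> S" "u \<ge> 0" "v \<ge> 0" "u + v = 1" for x y u v
  proof -
    have "f (u *\<^sub>R x + v *\<^sub>R y) \<le> u * f x + v * f y"
      and "g (u *\<^sub>R x + v *\<^sub>R y) \<le> u * g x + v * g y"
      using that assms unfolding convex_on_def by blast+
    moreover have "u * f x + v * f y \<le> u * max (f x) (g x) + v * max (f y) (g y)"
      and "u * g x + v * g y \<le> u * max (f x) (g x) + v * max (f y) (g y)"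
      using that by (auto intro!: add_mono mult_left_mono)
    ultimately show ?thesis
      by linarith
  qed
  ultimately show ?thesis
    unfolding convex_on_def by blast
qed

lemma convex_on_affine_real:
  fixes a b :: real
  assumes "convex S"
  shows "convex_on S (\<lambda>x. a + b * x)"
proof -
  have "u * (a + b * x) + v * (a + b * y) = (u + v) * a + b * (u * x + v * y)" for u v x y :: real
    by (simp add: algebra_simps)
  then show ?thesis
    using assms unfolding convex_on_def by simp
qed

lemma largest_convex_minorant_ge:
  assumes "largest_convex_minorant h H" and "convex_on {0<..} g"
    and "\<And>x. x > 0 \<Longrightarrow> g x \<le> h x" and "x > 0"
  shows "g x \<le> H x"
  using assms unfolding largest_convex_minorant_def by blast

lemma largest_convex_minorant_le:
  assumes "largest_convex_minorant h H" and "x > 0"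
  shows "H x \<le> h x"
  using assms unfolding largest_convex_minorant_def by blast

lemma largest_convex_minorant_nonneg:
  assumes "largest_convex_minorant h H" and "\<And>x. x > 0 \<Longrightarrow> h x \<ge> 0" and "x > 0"
  shows "H x \<ge> 0"
  using largest_convex_minorant_ge[of h H "\<lambda>_. 0"] assms by (simp add: convex_on_const)

lemma tent_le_min_powr_ratio:
  fixes x\<^sub>0 x \<beta> :: real
  assumes "x\<^sub>0 > 0" and "x > 0" and "\<beta> \<ge> 0"
  shows "max 0 (1 - x / (2 * x\<^sub>0)) / 2 powr \<beta> \<le> min 1 (x\<^sub>0 powr \<beta> / x powr \<beta>)"
proof (cases "x \<le> 2 * x\<^sub>0")
  case True
  have K: "2 powr \<beta> \<ge> 1"
    using assms(3) by (intro ge_one_powr_ge_zero) auto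
  have "max 0 (1 - x / (2 * x\<^sub>0)) / 2 powr \<beta> \<le> 1 / 2 powr \<beta>"
    using assms K by (intro divide_right_mono) (auto simp: field_simps)
  moreover have "x powr \<beta> \<le> 2 powr \<beta> * x\<^sub>0 powr \<beta>"
    using True assms powr_mono2[of \<beta> x "2 * x\<^sub>0"] by (simp add: powr_mult)
  then have "1 / 2 powr \<beta> \<le> x\<^sub>0 powr \<beta> / x powr \<beta>"
    using assms by (simp add: field_simps)
  moreover have "1 / 2 powr \<beta> \<le> 1"
    using K by simp
  ultimately show ?thesis
    by linarith
next
  case False
  then show ?thesis
    using assms by (simp add: field_simps)
qed

lemma largest_convex_minorant_lower_bound:
  fixes h H :: "real \<Rightarrow> real"
  assumes H: "largest_convex_minorant h H"
    and h_nonneg: "\<And>x. x > 0 \<Longrightarrow> h x \<ge> 0"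
    and C: "C \<ge> 1" and beta: "\<beta> \<ge> 0"
    and hyp: "\<And>s. s > 0 \<Longrightarrow> h s + C \<ge> (1 / C) * min 1 (x\<^sub>0 powr \<beta> / s powr \<beta>) * h x\<^sub>0"
    and x\<^sub>0: "x\<^sub>0 > 0"
  shows "h x\<^sub>0 \<le> 2 * 2 powr \<beta> * C * (H x\<^sub>0 + C)"
proof -
  define K where "K = 2 powr \<beta>"
  have K: "K \<ge> 1"
    unfolding K_def using beta by (intro ge_one_powr_ge_zero) auto
  define c where "c = h x\<^sub>0 / (C * K)"
  have c: "c \<ge> 0"
    unfolding c_def using h_nonneg[OF x\<^sub>0] C K by simp
  define tent where "tent x = c * max 0 (1 - x / (2 * x\<^sub>0)) - C" for x
  have "convex_on {0<..} (\<lambda>x. 1 - x / (2 * x\<^sub>0))"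
    using convex_on_affine_real[of "{0<..}" 1 "- 1 / (2 * x\<^sub>0)"] by simp
  then have "convex_on {0<..} (\<lambda>x. max 0 (1 - x / (2 * x\<^sub>0)))"
    by (intro convex_on_max) (auto simp: convex_on_const)
  then have "convex_on {0<..} tent"
    unfolding tent_def using c by (intro convex_on_diff convex_on_cmul) (auto simp: concave_on_const)
  moreover have "tent x \<le> h x" if x: "x > 0" for x
  proof -
    have "c * max 0 (1 - x / (2 * x\<^sub>0))
        = (1 / C) * (max 0 (1 - x / (2 * x\<^sub>0)) / K) * h x\<^sub>0"
      unfolding c_def by simp
    also have "\<dots> \<le> (1 / C) * min 1 (x\<^sub>0 powr \<beta> / x powr \<beta>) * h x\<^sub>0"
      using tent_le_min_powr_ratio[OF x\<^sub>0 x beta] h_nonneg[OF x\<^sub>0] C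
      unfolding K_def by (intro mult_right_mono mult_left_mono) auto
    also have "\<dots> \<le> h x + C"
      using hyp[OF x] .
    finally show ?thesis
      unfolding tent_def by simp
  qed
  ultimately have "tent x\<^sub>0 \<le> H x\<^sub>0"
    using largest_convex_minorant_ge[OF H] x\<^sub>0 by blast
  moreover have "tent x\<^sub>0 = h x\<^sub>0 / (2 * K * C) - C"
    unfolding tent_def c_def using x\<^sub>0 by simp
  ultimately show ?thesis
    using C K unfolding K_def by (simp add: field_simps)
qed

theorem proposition2p24:
  fixes h H :: "real \<Rightarrow> real"
  assumes h_nonneg: "\<And>x. x > 0 \<Longrightarrow> h x \<ge> 0"
    and C: "C \<ge> 1" and beta: "\<beta> > 0"
    and hyp: "\<And>t s. t > 0 \<Longrightarrow> s > 0 \<Longrightarrow>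
               h s + C \<ge> (1 / C) * min 1 (t powr \<beta> / s powr \<beta>) * h t"
    and H: "largest_convex_minorant h H"
  shows "\<exists>A\<ge>1. \<forall>x>0. H x \<le> h x \<and> h x \<le> A * H x + A"
proof -
  define A where "A = 2 * 2 powr \<beta> * C\<^sup>2"
  have K: "2 powr \<beta> \<ge> 1"
    using beta by (intro ge_one_powr_ge_zero) auto
  have "A \<ge> 1"
    unfolding A_def using mult_mono[OF K one_le_power[OF C, of 2]] by simp
  moreover have "h x \<le> A * H x + A" if x: "x > 0" for x
  proof -
    have "h x \<le> 2 * 2 powr \<beta> * C * (H x + C)"
      using largest_convex_minorant_lower_bound[OF H h_nonneg C _ hyp x] beta x by auto
    also have "\<dots> = 2 * 2 powr \<beta> * (C * H x) + A"
      unfolding A_def by (simp add: algebra_simps power2_eq_square)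
    also have "\<dots> \<le> 2 * 2 powr \<beta> * (C\<^sup>2 * H x) + A"
      using largest_convex_minorant_nonneg[OF H h_nonneg x] C
      by (intro add_right_mono mult_left_mono mult_right_mono) (auto simp: power2_eq_square)
    also have "\<dots> = A * H x + A"
      unfolding A_def by simp
    finally show ?thesis .
  qed
  ultimately show ?thesis
    using largest_convex_minorant_le[OF H] by blast
qed

end
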